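(* Let $f_w\ge1$ and $q_w\ge 2f_w+1$ be integers and let $g_1,\dots,g_{h_w}\in\mathbb{R}^d$ (correct gradients). For each $j\in\{1,\dots,m\}$ let $(y^{(j)}_1,\dots,y^{(j)}_{q_w})$ be a list of vectors of $\mathbb{R}^d$ of which at least $q_w-f_w$ entries belong to $\{g_1,\dots,g_{h_w}\}$ (the others arbitrary), and let $G_j=\mathrm{MDA}_{f_w}(y^{(j)}_1,\dots,y^{(j)}_{q_w})$. Then for each $j$ there exists $r^*(j)$ with $\|G_j-g_{r^*(j)}\|_2\le D$, where $D=\max_{r,s}\|g_r-g_s\|_2$, and consequently $$\max_{j,k\in\{1,\dots,m\}}\|G_j-G_k\|_2\le 3\max_{r,s\in\{1,\dots,h_w\}}\|g_r-g_s\|_2 .$$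
   Context: Minimum–Diameter Averaging: for integers $f\ge 0$, $q\ge 2f+1$ and vectors $x_1,\dots,x_q\in\mathbb{R}^d$, $\mathrm{MDA}_f(x_1,\dots,x_q)$ is defined as follows: among all index sets $I\subset\{1,\dots,q\}$ with $|I|=q-f$, choose one, $I^*$, minimizing $\max_{i,j\in I}\|x_i-x_j\|_2$ (ties broken arbitrarily); then $\mathrm{MDA}_f(x_1,\dots,x_q)=\frac{1}{q-f}\sum_{i\in I^*}x_i$. *)

theory Defs
  imports "HOL-Analysis.Analysis"
begin

definition idx_diam :: "(nat \<Rightarrow> 'a::metric_space) \<Rightarrow> nat set \<Rightarrow> real" where
  "idx_diam x I = Max {dist (x i) (x j) | i j. i \<in> I \<and> j \<in> I}"

text \<open>G is a possible value of MDA_f(x_1,...,x_q): the average over some index set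
  I of size q - f minimizing the diameter (ties broken arbitrarily).\<close>
definition is_MDA :: "nat \<Rightarrow> nat \<Rightarrow> (nat \<Rightarrow> 'a::real_normed_vector) \<Rightarrow> 'a \<Rightarrow> bool" where
  "is_MDA f q x G \<longleftrightarrow>
     (\<exists>I. I \<subseteq> {1..q} \<and> card I = q - f \<and>
          (\<forall>J. J \<subseteq> {1..q} \<and> card J = q - f \<longrightarrow> idx_diam x I \<le> idx_diam x J) \<and>
          G = (1 / real (q - f)) *\<^sub>R (\<Sum>i\<in>I. x i))"

end

theory Submission
  imports Defs
begin

text \<open>Some correct vectors (at least \<open>q - f\<close> of them, pairwise within \<open>D\<close>) form a candidate
  index set of diameter at most \<open>D\<close>, so the minimizing set \<open>I\<close> has diameter at most \<open>D\<close>.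
  Since \<open>q > 2f\<close>, \<open>I\<close> also contains a correct index \<open>i\<^sub>0\<close>; every \<open>x i\<close> with \<open>i \<in> I\<close> lies
  within \<open>D\<close> of \<open>x i\<^sub>0\<close>, hence so does their average. Two outputs are therefore within
  \<open>D + D + D\<close> of each other.\<close>

lemma dist_le_idx_diam:
  assumes "finite I" "i \<in> I" "j \<in> I"
  shows "dist (x i) (x j) \<le> idx_diam x I"
  unfolding idx_diam_def
  by (rule Max_ge) (use assms in \<open>auto intro: finite_image_set2\<close>)

lemma idx_diam_le:
  assumes "finite I" "I \<noteq> {}" "\<And>i j. i \<in> I \<Longrightarrow> j \<in> I \<Longrightarrow> dist (x i) (x j) \<le> D"
  shows "idx_diam x I \<le> D"
  unfolding idx_diam_def
proof (rule Max.boundedI)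
  show "finite {dist (x i) (x j) |i j. i \<in> I \<and> j \<in> I}"
    using assms(1) by (auto intro: finite_image_set2)
  obtain i where "i \<in> I" using assms(2) by blast
  then show "{dist (x i) (x j) |i j. i \<in> I \<and> j \<in> I} \<noteq> {}" by blast
qed (use assms(3) in blast)

lemma dist_mean_le:
  fixes x :: "nat \<Rightarrow> 'a::real_normed_vector"
  assumes "finite I" "I \<noteq> {}" "\<And>i. i \<in> I \<Longrightarrow> dist (x i) c \<le> D"
  shows "dist ((1 / real (card I)) *\<^sub>R (\<Sum>i\<in>I. x i)) c \<le> D"
proof -
  have n: "real (card I) > 0" using assms(1,2) by (simp add: card_gt_0_iff)
  have "(\<Sum>i\<in>I. x i - c) = (\<Sum>i\<in>I. x i) - real (card I) *\<^sub>R c"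
    by (simp add: sum_subtractf sum_constant_scaleR)
  then have "(1 / real (card I)) *\<^sub>R (\<Sum>i\<in>I. x i) - c = (1 / real (card I)) *\<^sub>R (\<Sum>i\<in>I. x i - c)"
    using n by (simp add: scaleR_diff_right)
  then have "dist ((1 / real (card I)) *\<^sub>R (\<Sum>i\<in>I. x i)) c
      = (1 / real (card I)) * norm (\<Sum>i\<in>I. x i - c)"
    by (simp add: dist_norm)
  also have "\<dots> \<le> (1 / real (card I)) * (\<Sum>i\<in>I. norm (x i - c))"
    by (intro mult_left_mono norm_sum) auto
  also have "\<dots> \<le> (1 / real (card I)) * (real (card I) * D)"
    using sum_bounded_above[of I "\<lambda>i. norm (x i - c)" D] assms(3)
    by (intro mult_left_mono) (auto simp: dist_norm)
  also have "\<dots> = D" using n by simp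
  finally show ?thesis .
qed

lemma is_MDA_near_clustered_entry:
  fixes x :: "nat \<Rightarrow> 'a::real_normed_vector"
  assumes "q > 2 * f" and "is_MDA f q x G"
    and S: "S \<subseteq> {1..q}" "card S \<ge> q - f"
    and clustered: "\<And>i j. i \<in> S \<Longrightarrow> j \<in> S \<Longrightarrow> dist (x i) (x j) \<le> D"
  shows "\<exists>i\<in>S. dist G (x i) \<le> D"
proof -
  obtain I where I: "I \<subseteq> {1..q}" "card I = q - f"
    and I_min: "\<And>J. J \<subseteq> {1..q} \<Longrightarrow> card J = q - f \<Longrightarrow> idx_diam x I \<le> idx_diam x J"
    and G: "G = (1 / real (q - f)) *\<^sub>R (\<Sum>i\<in>I. x i)"
    using assms(2) unfolding is_MDA_def by blast
  have "finite I" using I(1) finite_subset by blast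
  have "I \<noteq> {}" using I(2) assms(1) by auto
  obtain J where J: "J \<subseteq> S" "card J = q - f" and "finite J"
    by (rule obtain_subset_with_card_n[OF S(2)])
  have "J \<noteq> {}" using J(2) assms(1) by auto
  have "idx_diam x I \<le> idx_diam x J"
    using I_min J S(1) by blast
  also have "\<dots> \<le> D"
    using J(1) clustered by (intro idx_diam_le[OF \<open>finite J\<close> \<open>J \<noteq> {}\<close>]) auto
  finally have diam_I: "idx_diam x I \<le> D" .
  obtain i0 where i0: "i0 \<in> I" "i0 \<in> S"
  proof -
    have "card (I \<union> S) \<le> q"
      using I(1) S(1) by (intro card_mono[of "{1..q}", simplified]) auto
    then have "I \<inter> S \<noteq> {}"
      using card_Un_disjoint[of I S] \<open>finite I\<close> finite_subset[OF S(1)] I(2) S(2) assms(1)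
      by auto
    then show thesis using that by blast
  qed
  have "dist G (x i0) \<le> D"
    unfolding G I(2)[symmetric]
  proof (rule dist_mean_le[OF \<open>finite I\<close> \<open>I \<noteq> {}\<close>])
    fix i assume "i \<in> I"
    then show "dist (x i) (x i0) \<le> D"
      using dist_le_idx_diam[OF \<open>finite I\<close> \<open>i \<in> I\<close> i0(1), of x] diam_I by linarith
  qed
  then show ?thesis using i0(2) by blast
qed

lemma norm_diff_le_Max_pairs:
  fixes g :: "nat \<Rightarrow> 'a::real_normed_vector"
  assumes "finite A" "r \<in> A" "s \<in> A"
  shows "norm (g r - g s) \<le> Max {norm (g r' - g s') | r' s'. r' \<in> A \<and> s' \<in> A}"
  by (rule Max_ge) (use assms in \<open>auto intro: finite_image_set2\<close>)

theorem mainTheorem8: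
  fixes f q h m :: nat
    and g :: "nat \<Rightarrow> real ^ 'd"
    and y :: "nat \<Rightarrow> nat \<Rightarrow> real ^ 'd"
    and G :: "nat \<Rightarrow> real ^ 'd"
  assumes "f \<ge> 1" and "q \<ge> 2 * f + 1"
    and "\<forall>j\<in>{1..m}. card {i \<in> {1..q}. y j i \<in> g ` {1..h}} \<ge> q - f"
    and "\<forall>j\<in>{1..m}. is_MDA f q (y j) (G j)"
  shows "(\<forall>j\<in>{1..m}. \<exists>r\<in>{1..h}.
            norm (G j - g r) \<le> Max {norm (g r' - g s) | r' s. r' \<in> {1..h} \<and> s \<in> {1..h}})
       \<and> (\<forall>j\<in>{1..m}. \<forall>k\<in>{1..m}.
            norm (G j - G k) \<le> 3 * Max {norm (g r - g s) | r s. r \<in> {1..h} \<and> s \<in> {1..h}})"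
proof -
  define D where "D = Max {norm (g r - g s) | r s. r \<in> {1..h} \<and> s \<in> {1..h}}"
  have g_diam: "dist (g r) (g s) \<le> D" if "r \<in> {1..h}" "s \<in> {1..h}" for r s
    using norm_diff_le_Max_pairs[of "{1..h}" r s g] that by (simp add: D_def dist_norm)
  have near: "\<exists>r\<in>{1..h}. dist (G j) (g r) \<le> D" if "j \<in> {1..m}" for j
  proof -
    have "\<exists>i\<in>{i \<in> {1..q}. y j i \<in> g ` {1..h}}. dist (G j) (y j i) \<le> D"
      using assms(2-4) that g_diam
      by (intro is_MDA_near_clustered_entry[where f = f and q = q]) auto
    then show ?thesis by auto
  qed
  have "dist (G j) (G k) \<le> 3 * D" if j: "j \<in> {1..m}" and k: "k \<in> {1..m}" for j k
  proof -
    obtain r where r: "r \<in> {1..h}" "dist (G j) (g r) \<le> D" using near j by blast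
    obtain s where s: "s \<in> {1..h}" "dist (g s) (G k) \<le> D" using near[OF k] by (metis dist_commute)
    have "dist (G j) (G k) \<le> dist (G j) (g r) + dist (g r) (g s) + dist (g s) (G k)"
      using dist_triangle[of "G j" "G k" "g r"] dist_triangle[of "g r" "G k" "g s"] by linarith
    then show ?thesis using r s g_diam[of r s] by linarith
  qed
  then show ?thesis using near by (auto simp: D_def dist_norm)
qed

end
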